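(* Let $\rho$ be a positive semidefinite operator on $h$ with $\mathrm{tr}\,\rho>0$, and let $\rho_0$ denote $\rho$ acting on slice $0$. Let $\mathcal H_E$ be an "environment" Hilbert space isomorphic to $\mathcal H$, with $\mathbb 1_E$ its identity. Let $|\Phi^+\rangle=\sum_{\mathbf i}|\mathbf i\rangle|\mathbf i\rangle_E$ be the unnormalized maximally entangled vector, where $\mathbf i=(i_0,\dots,i_{N-1})$ runs over the product basis. Define $$|\Psi\rangle:=\big(\rho_0e^{i\tilde{\mathcal S}/2}\otimes\mathbb 1_E\big)|\Phi^+\rangle,\qquad |\overline\Psi\rangle:=\big(e^{i\tilde{\mathcal S}/2}\otimes\mathbb 1_E\big)^\dagger|\Phi^+\rangle,\qquad R:=\frac{|\Psi\rangle\langle\overline\Psi|}{\langle\overline\Psi|\Psi\rangle}.$$ Then $R$ is well defined and satisfies $R^2=R$ and $\mathrm{Tr}\,R=1$ (trace on $\mathcal H\otimes\mathcal H_E$). Moreover, $$\mathrm{Tr}_E[R]=\frac{\rho_0e^{i\tilde{\mathcal S}}}{\mathrm{tr}[\rho]},$$ and for every $t\in\{0,\dots,N-1\}$, the partial trace of $R$ over $\mathcal H_E$ and over all slices $t'\neq t$ equals $$\frac{\rho(t)}{\mathrm{tr}[\rho]},\qquad \rho(t)=e^{-i\epsilon tH}\rho\,e^{i\epsilon tH}.$$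
   Context: Bosonic-like setting. Fix integers $d\ge1$, $N\ge1$, a real $\epsilon>0$, and set $T=\epsilon N$. Let $h$ be a $d$-dimensional Hilbert space with orthonormal basis $\{|i\rangle\}_{i=1}^d$ and trace $\mathrm{tr}$. The space $\mathcal H$. Let $\mathcal H=h^{\otimes N}$, with factors labelled by time slices $t=0,\dots,N-1$, and trace $\mathrm{Tr}$. For an operator $A$ on $h$, $A_t$ denotes $A$ acting on factor $t$ tensored with identities elsewhere. Time translation. Let $C$ be the cyclic shift $C|i_0i_1\dots i_{N-1}\rangle=|i_{N-1}i_0\dots i_{N-2}\rangle$. Fix a hermitian operator $\mathcal P$ on $\mathcal H$ with $e^{i\epsilon\mathcal P}=C$. Quantum action. Let $H$ be a hermitian operator (Hamiltonian) on $h$. Define $$e^{i\mathcal S}:=C\prod_{t=0}^{N-1}e^{-i\epsilon H_t},\qquad \mathcal V:=\prod_{t}e^{i\epsilon tH_t},$$ $$e^{i\tilde{\mathcal S}}:=e^{iTH_0}e^{i\mathcal S}\ \big(=\mathcal V^\dagger C\mathcal V\big),\qquad e^{i\tilde{\mathcal S}/2}:=\mathcal V^\dagger e^{i\epsilon\mathcal P/2}\mathcal V.$$ *)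

theory Defs
  imports Complex_Main "HOL-Library.Complex_Order"
begin

text \<open>Operators on a finite-dimensional Hilbert space with orthonormal basis indexed
by a finite set I are represented by their matrix kernels  'a => 'a => complex
(A x y = <x|A|y>); all operations only look at entries indexed by I.\<close>

type_synonym 'a kernel = "'a \<Rightarrow> 'a \<Rightarrow> complex"

definition kmult :: "'a set \<Rightarrow> 'a kernel \<Rightarrow> 'a kernel \<Rightarrow> 'a kernel" where
  "kmult I A B = (\<lambda>x y. \<Sum>z\<in>I. A x z * B z y)"

definition kid :: "'a kernel" where
  "kid = (\<lambda>x y. if x = y then 1 else 0)"

definition kadj :: "'a kernel \<Rightarrow> 'a kernel" where
  "kadj A = (\<lambda>x y. cnj (A y x))"

definition kscale :: "complex \<Rightarrow> 'a kernel \<Rightarrow> 'a kernel" where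
  "kscale c A = (\<lambda>x y. c * A x y)"

fun kpow :: "'a set \<Rightarrow> 'a kernel \<Rightarrow> nat \<Rightarrow> 'a kernel" where
  "kpow I A 0 = kid"
| "kpow I A (Suc n) = kmult I A (kpow I A n)"

definition kexp :: "'a set \<Rightarrow> 'a kernel \<Rightarrow> 'a kernel" where
  "kexp I A = (\<lambda>x y. \<Sum>n. kpow I A n x y / fact n)"

definition ktrace :: "'a set \<Rightarrow> 'a kernel \<Rightarrow> complex" where
  "ktrace I A = (\<Sum>x\<in>I. A x x)"

definition hermitian_on :: "'a set \<Rightarrow> 'a kernel \<Rightarrow> bool" where
  "hermitian_on I A \<longleftrightarrow> (\<forall>x\<in>I. \<forall>y\<in>I. A x y = cnj (A y x))"

definition psd_on :: "'a set \<Rightarrow> 'a kernel \<Rightarrow> bool" where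
  "psd_on I A \<longleftrightarrow> hermitian_on I A \<and>
     (\<forall>v :: 'a \<Rightarrow> complex. 0 \<le> (\<Sum>x\<in>I. \<Sum>y\<in>I. cnj (v x) * A x y * v y))"

text \<open>The single-slice space h has basis {..<d}; H = h^(tensor N) has the product
basis |i_0 ... i_(N-1)>, indexed by lists of length N with entries < d.\<close>

definition slices :: "nat \<Rightarrow> nat \<Rightarrow> nat list set" where
  "slices d N = {xs. length xs = N \<and> (\<forall>i\<in>set xs. i < d)}"

definition site_op :: "nat \<Rightarrow> nat \<Rightarrow> nat kernel \<Rightarrow> nat list kernel" where
  "site_op N t A = (\<lambda>xs ys. A (xs ! t) (ys ! t) *
      (if \<forall>s<N. s \<noteq> t \<longrightarrow> xs ! s = ys ! s then 1 else 0))"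

definition kprod :: "'a set \<Rightarrow> 'a kernel list \<Rightarrow> 'a kernel" where
  "kprod I As = foldr (kmult I) As kid"

text \<open>Cyclic shift C |i_0 i_1 ... i_(N-1)> = |i_(N-1) i_0 ... i_(N-2)>.\<close>
definition shiftC :: "nat list kernel" where
  "shiftC = (\<lambda>xs ys. if ys \<noteq> [] \<and> xs = last ys # butlast ys then 1 else 0)"

definition eiS :: "nat \<Rightarrow> nat \<Rightarrow> real \<Rightarrow> nat kernel \<Rightarrow> nat list kernel" where
  "eiS d N \<epsilon> H = kmult (slices d N) shiftC
     (kprod (slices d N)
        (map (\<lambda>t. site_op N t (kexp {..<d} (kscale (- \<i> * of_real \<epsilon>) H))) [0..<N]))"

definition Vop :: "nat \<Rightarrow> nat \<Rightarrow> real \<Rightarrow> nat kernel \<Rightarrow> nat list kernel" where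
  "Vop d N \<epsilon> H = kprod (slices d N)
        (map (\<lambda>t. site_op N t (kexp {..<d} (kscale (\<i> * of_real \<epsilon> * of_nat t) H))) [0..<N])"

definition eiStilde :: "nat \<Rightarrow> nat \<Rightarrow> real \<Rightarrow> nat kernel \<Rightarrow> nat list kernel" where
  "eiStilde d N \<epsilon> H = kmult (slices d N)
     (site_op N 0 (kexp {..<d} (kscale (\<i> * of_real (\<epsilon> * real N)) H))) (eiS d N \<epsilon> H)"

definition eiStilde_half :: "nat \<Rightarrow> nat \<Rightarrow> real \<Rightarrow> nat kernel \<Rightarrow> nat list kernel \<Rightarrow> nat list kernel" where
  "eiStilde_half d N \<epsilon> H P = kmult (slices d N) (kadj (Vop d N \<epsilon> H))
     (kmult (slices d N) (kexp (slices d N) (kscale (\<i> * of_real \<epsilon> / 2) P)) (Vop d N \<epsilon> H))"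

text \<open>Joint space H (x) H_E with H_E a copy of H: basis indexed by pairs.\<close>

definition tensor_idE :: "'a kernel \<Rightarrow> ('a \<times> 'a) kernel" where
  "tensor_idE A = (\<lambda>(x, e) (y, f). A x y * kid e f)"

definition kapply :: "'b set \<Rightarrow> 'b kernel \<Rightarrow> ('b \<Rightarrow> complex) \<Rightarrow> 'b \<Rightarrow> complex" where
  "kapply J M v = (\<lambda>p. \<Sum>q\<in>J. M p q * v q)"

definition vinner :: "'b set \<Rightarrow> ('b \<Rightarrow> complex) \<Rightarrow> ('b \<Rightarrow> complex) \<Rightarrow> complex" where
  "vinner J u v = (\<Sum>p\<in>J. cnj (u p) * v p)"

definition PhiPlus :: "'a \<times> 'a \<Rightarrow> complex" where
  "PhiPlus = (\<lambda>(x, e). if x = e then 1 else 0)"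

definition Psi :: "nat \<Rightarrow> nat \<Rightarrow> real \<Rightarrow> nat kernel \<Rightarrow> nat list kernel \<Rightarrow> nat kernel \<Rightarrow> nat list \<times> nat list \<Rightarrow> complex" where
  "Psi d N \<epsilon> H P \<rho> = kapply (slices d N \<times> slices d N)
     (tensor_idE (kmult (slices d N) (site_op N 0 \<rho>) (eiStilde_half d N \<epsilon> H P))) PhiPlus"

definition Psibar :: "nat \<Rightarrow> nat \<Rightarrow> real \<Rightarrow> nat kernel \<Rightarrow> nat list kernel \<Rightarrow> nat list \<times> nat list \<Rightarrow> complex" where
  "Psibar d N \<epsilon> H P = kapply (slices d N \<times> slices d N)
     (kadj (tensor_idE (eiStilde_half d N \<epsilon> H P))) PhiPlus"

definition Rop :: "nat \<Rightarrow> nat \<Rightarrow> real \<Rightarrow> nat kernel \<Rightarrow> nat list kernel \<Rightarrow> nat kernel \<Rightarrow> (nat list \<times> nat list) kernel" where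
  "Rop d N \<epsilon> H P \<rho> = (\<lambda>p q. Psi d N \<epsilon> H P \<rho> p * cnj (Psibar d N \<epsilon> H P q) /
       vinner (slices d N \<times> slices d N) (Psibar d N \<epsilon> H P) (Psi d N \<epsilon> H P \<rho>))"

definition ptrace_E :: "'a set \<Rightarrow> ('a \<times> 'a) kernel \<Rightarrow> 'a kernel" where
  "ptrace_E I R = (\<lambda>x y. \<Sum>e\<in>I. R (x, e) (y, e))"

definition ptrace_except :: "nat \<Rightarrow> nat \<Rightarrow> nat \<Rightarrow> nat list kernel \<Rightarrow> nat kernel" where
  "ptrace_except d N t M = (\<lambda>a b. \<Sum>xs\<in>{xs \<in> slices d N. xs ! t = a}. M xs (xs[t := b]))"

end

theory Submission
  imports Defs
begin

(* Write U for e^{iS~/2}. Against the maximally entangled vector, Psi(x,e) is the matrix entry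
   (rho_0 U)(x,e) and Psibar(x,e) is conj U(e,x), so R is the normalised rank-one operator
   |Psi><Psibar| / <Psibar|Psi>: idempotent with unit trace, and Tr_E R = rho_0 U^2 / Tr(rho_0 U^2).
   Because e^{i eps P} = C, U^2 = V^dagger C V, and moving C through the product
   V = prod_t e^{i eps t H_t} turns this into e^{iS~}.
   V is a product of single-slice unitaries that is trivial on slice 0, so it commutes with rho_0,
   and tracing out every slice except t conjugates by its slice-t factor:
   Tr_{not t}(rho_0 e^{iS~}) = e^{-i eps t H} Tr_{not t}(rho_0 C) e^{i eps t H}.
   In Tr_{not t}(rho_0 C)(a,b) the shift chains neighbouring slices together, so the only basis
   string that contributes is a...ab...b (a on slices 0..t), and what remains is rho(a,b).
   At t = 0 this gives Tr(rho_0 U^2) = tr rho, which is nonzero. *)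

section \<open>Kernels as operators\<close>

(* kmult I sums over I only, so identities such as V V^dagger = kid hold only on I x I:
   keq_on I is equality of the operators the kernels represent. *)
definition keq_on :: "'a set \<Rightarrow> 'a kernel \<Rightarrow> 'a kernel \<Rightarrow> bool" where
  "keq_on I A B \<longleftrightarrow> (\<forall>x\<in>I. \<forall>y\<in>I. A x y = B x y)"

lemma keq_onI: "(\<And>x y. x \<in> I \<Longrightarrow> y \<in> I \<Longrightarrow> A x y = B x y) \<Longrightarrow> keq_on I A B"
  by (simp add: keq_on_def)

lemma keq_onD: "keq_on I A B \<Longrightarrow> x \<in> I \<Longrightarrow> y \<in> I \<Longrightarrow> A x y = B x y"
  by (simp add: keq_on_def)

lemma keq_on_refl [simp]: "keq_on I A A"
  by (simp add: keq_on_def)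

lemma keq_on_sym: "keq_on I A B \<Longrightarrow> keq_on I B A"
  by (simp add: keq_on_def)

lemma keq_on_trans [trans]: "keq_on I A B \<Longrightarrow> keq_on I B C \<Longrightarrow> keq_on I A C"
  by (simp add: keq_on_def)

lemma kmult_cong:
  assumes "\<And>z. z \<in> I \<Longrightarrow> A x z = A' x z" "\<And>z. z \<in> I \<Longrightarrow> B z y = B' z y"
  shows "kmult I A B x y = kmult I A' B' x y"
  unfolding kmult_def using assms by (intro sum.cong) auto

lemma kmult_keq_on:
  "keq_on I A A' \<Longrightarrow> keq_on I B B' \<Longrightarrow> keq_on I (kmult I A B) (kmult I A' B')"
  unfolding keq_on_def by (auto intro: kmult_cong)

lemma kmult_assoc: "kmult I (kmult I A B) C = kmult I A (kmult I B C)"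
proof (intro ext)
  fix x y
  have "(\<Sum>z\<in>I. (\<Sum>w\<in>I. A x w * B w z) * C z y) = (\<Sum>z\<in>I. \<Sum>w\<in>I. A x w * (B w z * C z y))"
    by (simp add: sum_distrib_right mult.assoc)
  also have "\<dots> = (\<Sum>w\<in>I. \<Sum>z\<in>I. A x w * (B w z * C z y))"
    by (rule sum.swap)
  also have "\<dots> = (\<Sum>w\<in>I. A x w * (\<Sum>z\<in>I. B w z * C z y))"
    by (simp add: sum_distrib_left)
  finally show "kmult I (kmult I A B) C x y = kmult I A (kmult I B C) x y"
    by (simp add: kmult_def)
qed

lemma kmult_kid_left: "finite I \<Longrightarrow> keq_on I (kmult I kid A) A"
  unfolding keq_on_def kmult_def kid_def by (simp add: if_distrib[of "\<lambda>c. c * _"] cong: if_cong)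

lemma kmult_kid_right: "finite I \<Longrightarrow> keq_on I (kmult I A kid) A"
  unfolding keq_on_def kmult_def kid_def by (simp add: if_distrib cong: if_cong)

lemma ktrace_cong: "keq_on I A B \<Longrightarrow> ktrace I A = ktrace I B"
  unfolding ktrace_def keq_on_def by simp

section \<open>The matrix exponential\<close>

lemma kpow_kscale: "kpow I (kscale c A) n = kscale (c ^ n) (kpow I A n)"
  by (induction n) (auto simp: kscale_def kmult_def sum_distrib_left mult_ac intro!: ext)

lemma kmult_kpow:
  assumes "finite I"
  shows "keq_on I (kmult I (kpow I A m) (kpow I A n)) (kpow I A (m + n))"
proof (induction m)
  case 0
  show ?case using kmult_kid_left[OF assms] by simp
next
  case (Suc m)
  have "keq_on I (kmult I A (kmult I (kpow I A m) (kpow I A n))) (kmult I A (kpow I A (m + n)))"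
    by (rule kmult_keq_on[OF keq_on_refl Suc])
  then show ?case by (simp add: kmult_assoc)
qed

lemma norm_kpow_le:
  assumes fin: "finite I" and x: "x \<in> I"
  shows "norm (kpow I A n x y) \<le> (1 + (\<Sum>u\<in>I. \<Sum>v\<in>I. norm (A u v))) ^ n"
  using x
proof (induction n arbitrary: x)
  case 0
  then show ?case by (simp add: kid_def)
next
  case (Suc n)
  let ?K = "1 + (\<Sum>u\<in>I. \<Sum>v\<in>I. norm (A u v))"
  have row: "(\<Sum>z\<in>I. norm (A x z)) \<le> ?K"
    using member_le_sum[of x I "\<lambda>u. \<Sum>v\<in>I. norm (A u v)"] Suc.prems fin
    by (simp add: sum_nonneg)
  have "norm (kpow I A (Suc n) x y) \<le> (\<Sum>z\<in>I. norm (A x z) * norm (kpow I A n z y))"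
    by (simp add: kmult_def norm_mult[symmetric] sum_norm_le)
  also have "\<dots> \<le> (\<Sum>z\<in>I. norm (A x z)) * ?K ^ n"
    unfolding sum_distrib_right using Suc.IH by (intro sum_mono mult_left_mono) auto
  also have "\<dots> \<le> ?K * ?K ^ n"
    using row by (intro mult_right_mono zero_le_power add_nonneg_nonneg sum_nonneg) auto
  finally show ?case by simp
qed

definition kexp_term :: "'a set \<Rightarrow> 'a kernel \<Rightarrow> complex \<Rightarrow> 'a \<Rightarrow> 'a \<Rightarrow> nat \<Rightarrow> complex" where
  "kexp_term I A c x y n = c ^ n * kpow I A n x y / fact n"

lemma kexp_kscale: "kexp I (kscale c A) x y = (\<Sum>n. kexp_term I A c x y n)"
  unfolding kexp_def kpow_kscale by (simp add: kscale_def kexp_term_def)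

lemma summable_norm_kexp_term:
  assumes "finite I" "x \<in> I"
  shows "summable (\<lambda>n. norm (kexp_term I A c x y n))"
proof -
  let ?K = "1 + (\<Sum>u\<in>I. \<Sum>v\<in>I. norm (A u v))"
  have "norm (kexp_term I A c x y n) \<le> inverse (fact n) * (norm c * ?K) ^ n" for n
  proof -
    have "norm (kexp_term I A c x y n) = norm c ^ n * norm (kpow I A n x y) / fact n"
      by (simp add: kexp_term_def norm_mult norm_divide norm_power)
    also have "\<dots> \<le> norm c ^ n * ?K ^ n / fact n"
      by (intro divide_right_mono mult_left_mono norm_kpow_le assms) auto
    finally show ?thesis
      by (simp add: power_mult_distrib divide_inverse mult_ac)
  qed
  then show ?thesis
    by (intro summable_comparison_test[OF _ summable_exp[of "norm c * ?K"]]) auto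
qed

lemma kexp_kscale_0: "finite I \<Longrightarrow> keq_on I (kexp I (kscale 0 A)) kid"
proof (rule keq_onI)
  fix x y
  have "(\<lambda>n. kexp_term I A 0 x y n) = (\<lambda>n. if n = 0 then kid x y else 0)"
    by (auto simp: kexp_term_def intro!: ext)
  then show "kexp I (kscale 0 A) x y = kid x y"
    using sums_single[of 0 "\<lambda>_. kid x y"] by (simp add: kexp_kscale sums_iff)
qed

lemma kexp_term_Cauchy_product:
  assumes "finite I" "x \<in> I" "y \<in> I"
  shows "(\<Sum>z\<in>I. \<Sum>i\<le>k. kexp_term I A a x z i * kexp_term I A b z y (k - i))
       = kexp_term I A (a + b) x y k"
proof -
  have "(\<Sum>z\<in>I. \<Sum>i\<le>k. kexp_term I A a x z i * kexp_term I A b z y (k - i))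
      = (\<Sum>i\<le>k. a ^ i * b ^ (k - i) / (fact i * fact (k - i)) * kmult I (kpow I A i) (kpow I A (k - i)) x y)"
    by (subst sum.swap) (simp add: kexp_term_def kmult_def sum_distrib_left mult_ac)
  also have "\<dots> = (\<Sum>i\<le>k. of_nat (k choose i) * a ^ i * b ^ (k - i) * kpow I A k x y / fact k)"
    using keq_onD[OF kmult_kpow[OF assms(1)] assms(2,3)]
    by (intro sum.cong refl) (simp add: binomial_fact)
  also have "\<dots> = kexp_term I A (a + b) x y k"
    by (simp add: kexp_term_def binomial_ring sum_distrib_right sum_divide_distrib)
  finally show ?thesis .
qed

lemma kexp_kscale_add:
  assumes fin: "finite I"
  shows "keq_on I (kmult I (kexp I (kscale a A)) (kexp I (kscale b A))) (kexp I (kscale (a + b) A))"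
proof (rule keq_onI)
  fix x y assume x: "x \<in> I" and y: "y \<in> I"
  have "(\<lambda>k. \<Sum>i\<le>k. kexp_term I A a x z i * kexp_term I A b z y (k - i))
      sums (kexp I (kscale a A) x z * kexp I (kscale b A) z y)" if "z \<in> I" for z
    unfolding kexp_kscale
    by (rule Cauchy_product_sums; rule summable_norm_kexp_term) (use fin x that in auto)
  then have "(\<lambda>k. \<Sum>z\<in>I. \<Sum>i\<le>k. kexp_term I A a x z i * kexp_term I A b z y (k - i))
      sums kmult I (kexp I (kscale a A)) (kexp I (kscale b A)) x y"
    unfolding kmult_def by (intro sums_sum) auto
  then show "kmult I (kexp I (kscale a A)) (kexp I (kscale b A)) x y = kexp I (kscale (a + b) A) x y"
    by (simp add: kexp_term_Cauchy_product[OF fin x y] kexp_kscale sums_iff)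
qed

lemma cnj_kpow:
  assumes fin: "finite I" and herm: "hermitian_on I A"
  shows "keq_on I (\<lambda>x y. cnj (kpow I A n y x)) (kpow I A n)"
proof (induction n)
  case 0
  show ?case by (simp add: keq_on_def kid_def)
next
  case (Suc n)
  have "keq_on I (\<lambda>x y. cnj (kpow I A (Suc n) y x)) (kmult I (kpow I A n) A)"
  proof (rule keq_onI)
    fix x y assume x: "x \<in> I" and y: "y \<in> I"
    have "cnj (kpow I A (Suc n) y x) = (\<Sum>z\<in>I. cnj (kpow I A n z x) * cnj (A y z))"
      by (simp add: kmult_def mult.commute)
    also have "\<dots> = kmult I (kpow I A n) A x y"
      unfolding kmult_def
    proof (intro sum.cong refl)
      fix z assume z: "z \<in> I"
      have "A z y = cnj (A y z)"
        using herm y z unfolding hermitian_on_def by blast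
      then show "cnj (kpow I A n z x) * cnj (A y z) = kpow I A n x z * A z y"
        using keq_onD[OF Suc x z] by simp
    qed
    finally show "cnj (kpow I A (Suc n) y x) = kmult I (kpow I A n) A x y" .
  qed
  also have "keq_on I \<dots> (kmult I (kpow I A n) (kpow I A 1))"
    using kmult_kid_right[OF fin, of A] by (intro kmult_keq_on keq_on_refl) (simp add: keq_on_sym)
  also have "keq_on I \<dots> (kpow I A (Suc n))"
    using kmult_kpow[OF fin, of A n 1] by simp
  finally show ?case .
qed

lemma kadj_kexp_kscale:
  assumes fin: "finite I" and herm: "hermitian_on I A"
  shows "keq_on I (kadj (kexp I (kscale c A))) (kexp I (kscale (cnj c) A))"
proof (rule keq_onI)
  fix x y assume x: "x \<in> I" and y: "y \<in> I"
  have "(\<lambda>n. kexp_term I A c y x n) sums kexp I (kscale c A) y x"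
    unfolding kexp_kscale using summable_norm_kexp_term[OF fin y]
    by (simp add: summable_norm_cancel summable_sums)
  then have "(\<lambda>n. cnj (kexp_term I A c y x n)) sums cnj (kexp I (kscale c A) y x)"
    by (simp add: sums_cnj)
  moreover have "cnj (kexp_term I A c y x n) = kexp_term I A (cnj c) x y n" for n
    using keq_onD[OF cnj_kpow[OF fin herm] x y] by (simp add: kexp_term_def)
  ultimately show "kadj (kexp I (kscale c A)) x y = kexp I (kscale (cnj c) A) x y"
    by (simp add: kadj_def kexp_kscale sums_iff)
qed

section \<open>Product operators on the slice space\<close>

definition ktensor :: "nat \<Rightarrow> (nat \<Rightarrow> nat kernel) \<Rightarrow> nat list kernel" where
  "ktensor N B = (\<lambda>xs ys. \<Prod>t<N. B t (xs ! t) (ys ! t))"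

lemma slices_0: "slices d 0 = {[]}"
  by (auto simp: slices_def)

lemma slices_Suc: "slices d (Suc N) = (\<lambda>(c, xs). c # xs) ` ({..<d} \<times> slices d N)"
  by (auto simp: slices_def length_Suc_conv image_iff)

lemma finite_slices: "finite (slices d N)"
  by (induction N) (auto simp: slices_0 slices_Suc)

lemma slices_length: "xs \<in> slices d N \<Longrightarrow> length xs = N"
  by (simp add: slices_def)

lemma slices_nth_less: "xs \<in> slices d N \<Longrightarrow> t < N \<Longrightarrow> xs ! t < d"
  by (auto simp: slices_def)

lemma slices_update: "xs \<in> slices d N \<Longrightarrow> b < d \<Longrightarrow> xs[t := b] \<in> slices d N"
  by (auto simp: slices_def dest: set_update_subset_insert[THEN subsetD])

lemma sum_slices_prod:
  "(\<Sum>xs\<in>slices d N. \<Prod>t<N. g t (xs ! t)) = (\<Prod>t<N. \<Sum>c<d. g t c :: complex)"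
proof (induction N arbitrary: g)
  case 0
  then show ?case by (simp add: slices_0)
next
  case (Suc N)
  have inj: "inj_on (\<lambda>(c, xs). c # xs) ({..<d} \<times> slices d N)"
    by (auto simp: inj_on_def)
  have "(\<Sum>xs\<in>slices d (Suc N). \<Prod>t<Suc N. g t (xs ! t))
      = (\<Sum>(c, xs)\<in>{..<d} \<times> slices d N. g 0 c * (\<Prod>t<N. g (Suc t) (xs ! t)))"
    unfolding slices_Suc sum.reindex[OF inj]
    by (simp del: prod.lessThan_Suc add: case_prod_beta prod.lessThan_Suc_shift)
  also have "\<dots> = (\<Sum>c<d. g 0 c) * (\<Prod>t<N. \<Sum>c<d. g (Suc t) c)"
    by (simp add: sum.cartesian_product[symmetric] sum_product[symmetric] Suc.IH[of "\<lambda>t. g (Suc t)"])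
  also have "\<dots> = (\<Prod>t<Suc N. \<Sum>c<d. g t c)"
    by (simp only: prod.lessThan_Suc_shift)
  finally show ?case .
qed

lemma kmult_ktensor:
  "kmult (slices d N) (ktensor N A) (ktensor N B) = ktensor N (\<lambda>t. kmult {..<d} (A t) (B t))"
proof (intro ext)
  fix xs ys
  show "kmult (slices d N) (ktensor N A) (ktensor N B) xs ys = ktensor N (\<lambda>t. kmult {..<d} (A t) (B t)) xs ys"
    unfolding kmult_def ktensor_def prod.distrib[symmetric]
    by (rule sum_slices_prod[where g = "\<lambda>t c. A t (xs ! t) c * B t c (ys ! t)"])
qed

lemma kadj_ktensor: "kadj (ktensor N A) = ktensor N (\<lambda>t. kadj (A t))"
  by (simp add: kadj_def ktensor_def)

lemma prod_indicator:
  "finite T \<Longrightarrow> (\<Prod>t\<in>T. if P t then 1 else 0 :: 'a :: comm_semiring_1) = (if \<forall>t\<in>T. P t then 1 else 0)"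
  by (induction T rule: finite_induct) auto

lemma ktensor_kid: "keq_on (slices d N) (ktensor N (\<lambda>_. kid)) kid"
  unfolding keq_on_def ktensor_def kid_def
  by (simp add: prod_indicator slices_length list_eq_iff_nth_eq)

lemma site_op_eq_ktensor:
  assumes "t < N"
  shows "site_op N t A = ktensor N (\<lambda>s. if s = t then A else kid)"
proof (intro ext)
  fix xs ys
  have "ktensor N (\<lambda>s. if s = t then A else kid) xs ys
      = A (xs ! t) (ys ! t) * (\<Prod>s\<in>{..<N} - {t}. if xs ! s = ys ! s then 1 else 0)"
    unfolding ktensor_def using assms
    by (subst prod.remove[of _ t]) (auto simp: kid_def intro!: prod.cong)
  then show "site_op N t A xs ys = ktensor N (\<lambda>s. if s = t then A else kid) xs ys"
    by (simp add: site_op_def prod_indicator)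
qed

lemma ktensor_keq_on:
  "(\<And>t. t < N \<Longrightarrow> keq_on {..<d} (B t) (B' t)) \<Longrightarrow> keq_on (slices d N) (ktensor N B) (ktensor N B')"
  unfolding keq_on_def ktensor_def by (auto simp: slices_nth_less intro!: prod.cong)

lemma kprod_Cons: "kprod I (A # As) = kmult I A (kprod I As)"
  by (simp add: kprod_def)

lemma kprod_ktensor:
  assumes "\<And>t. t \<in> set ts \<Longrightarrow> keq_on (slices d N) (f t) (ktensor N (B t))"
  shows "keq_on (slices d N) (kprod (slices d N) (map f ts))
           (ktensor N (\<lambda>s. kprod {..<d} (map (\<lambda>t. B t s) ts)))"
  using assms
proof (induction ts)
  case Nil
  show ?case using keq_on_sym[OF ktensor_kid] by (simp add: kprod_def)
next
  case (Cons t ts)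
  have "keq_on (slices d N) (kprod (slices d N) (map f (t # ts)))
      (kmult (slices d N) (ktensor N (B t)) (ktensor N (\<lambda>s. kprod {..<d} (map (\<lambda>t. B t s) ts))))"
    unfolding list.map kprod_Cons by (rule kmult_keq_on) (use Cons in auto)
  then show ?case
    by (simp add: kmult_ktensor kprod_Cons)
qed

lemma kprod_single_site:
  assumes "finite I" "distinct ts"
  shows "keq_on I (kprod I (map (\<lambda>t. if s = t then F t else kid) ts))
           (if s \<in> set ts then F s else kid)"
  using assms(2)
proof (induction ts)
  case Nil
  then show ?case by (simp add: kprod_def)
next
  case (Cons t ts)
  have "keq_on I (kprod I (map (\<lambda>t. if s = t then F t else kid) (t # ts)))
      (kmult I (if s = t then F t else kid) (if s \<in> set ts then F s else kid))"
    unfolding list.map kprod_Cons by (rule kmult_keq_on) (use Cons in auto)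
  also have "keq_on I \<dots> (if s \<in> set (t # ts) then F s else kid)"
    using Cons.prems kmult_kid_left[OF assms(1)] kmult_kid_right[OF assms(1)]
    by (cases "s = t") auto
  finally show ?case .
qed

lemma kprod_site_ops:
  "keq_on (slices d N) (kprod (slices d N) (map (\<lambda>t. site_op N t (F t)) [0..<N])) (ktensor N F)"
proof -
  have "keq_on (slices d N) (kprod (slices d N) (map (\<lambda>t. site_op N t (F t)) [0..<N]))
      (ktensor N (\<lambda>s. kprod {..<d} (map (\<lambda>t. if s = t then F t else kid) [0..<N])))"
    by (rule kprod_ktensor[where B = "\<lambda>t s. if s = t then F t else kid"])
       (simp add: site_op_eq_ktensor)
  also have "keq_on (slices d N) \<dots> (ktensor N F)"
  proof (rule ktensor_keq_on)
    fix s assume "s < N"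
    then show "keq_on {..<d} (kprod {..<d} (map (\<lambda>t. if s = t then F t else kid) [0..<N])) (F s)"
      using kprod_single_site[of "{..<d}" "[0..<N]" s F] by simp
  qed
  finally show ?thesis .
qed

section \<open>The cyclic shift\<close>

lemma rotate1_slices: "xs \<in> slices d N \<Longrightarrow> rotate1 xs \<in> slices d N"
  by (simp add: slices_def)

lemma last_Cons_butlast_slices: "N \<ge> 1 \<Longrightarrow> ys \<in> slices d N \<Longrightarrow> last ys # butlast ys \<in> slices d N"
  by (cases ys rule: rev_cases) (auto simp: slices_def)

lemma shiftC_eq: "xs \<noteq> [] \<Longrightarrow> shiftC xs zs = (if zs = rotate1 xs then 1 else 0)"
  by (cases xs) (auto simp: shiftC_def)

lemma kmult_shiftC_left:
  assumes "N \<ge> 1" "xs \<in> slices d N"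
  shows "kmult (slices d N) shiftC K xs ys = K (rotate1 xs) ys"
proof -
  have "xs \<noteq> []" using assms slices_length by fastforce
  then have "kmult (slices d N) shiftC K xs ys = (\<Sum>zs\<in>slices d N. if zs = rotate1 xs then K zs ys else 0)"
    unfolding kmult_def by (intro sum.cong) (auto simp: shiftC_eq)
  then show ?thesis
    using rotate1_slices[OF assms(2)] by (simp add: finite_slices)
qed

lemma kmult_shiftC_right:
  assumes "N \<ge> 1" "ys \<in> slices d N"
  shows "kmult (slices d N) K shiftC xs ys = K xs (last ys # butlast ys)"
proof -
  have "ys \<noteq> []" using assms slices_length by fastforce
  then have "kmult (slices d N) K shiftC xs ys
      = (\<Sum>zs\<in>slices d N. if zs = last ys # butlast ys then K xs zs else 0)"
    unfolding kmult_def shiftC_def by (intro sum.cong) auto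
  then show ?thesis
    using last_Cons_butlast_slices[OF assms] by (simp add: finite_slices)
qed

lemma nth_last_Cons_butlast:
  assumes "length ys = N" "t < N"
  shows "(last ys # butlast ys) ! t = ys ! ((t + N - 1) mod N)"
proof (cases t)
  case 0
  then show ?thesis using assms by (cases ys rule: rev_cases) auto
next
  case (Suc u)
  then show ?thesis using assms by (simp add: nth_butlast)
qed

lemma pred_mod_Suc_mod: "u < N \<Longrightarrow> (Suc u mod N + N - 1) mod N = u"
  by (cases "Suc u = N") auto

lemma Suc_mod_pred_mod: "t < N \<Longrightarrow> Suc ((t + N - 1) mod N) mod N = t"
  by (cases t) (auto simp: Suc_diff_le)

lemma shiftC_ktensor:
  assumes N: "N \<ge> 1"
  shows "keq_on (slices d N) (kmult (slices d N) shiftC (ktensor N B))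
           (kmult (slices d N) (ktensor N (\<lambda>s. B ((s + N - 1) mod N))) shiftC)"
proof (rule keq_onI)
  fix xs ys assume xs: "xs \<in> slices d N" and ys: "ys \<in> slices d N"
  have lx: "length xs = N" and ly: "length ys = N"
    using xs ys slices_length by auto
  have bij: "bij_betw (\<lambda>u. Suc u mod N) {..<N} {..<N}"
    by (rule bij_betw_byWitness[where f' = "\<lambda>t. (t + N - 1) mod N"])
       (use N pred_mod_Suc_mod Suc_mod_pred_mod in auto)
  have "kmult (slices d N) shiftC (ktensor N B) xs ys = (\<Prod>u<N. B u (xs ! (Suc u mod N)) (ys ! u))"
    using kmult_shiftC_left[OF N xs] by (simp add: ktensor_def nth_rotate1 lx)
  also have "\<dots> = (\<Prod>u<N. (\<lambda>t. B ((t + N - 1) mod N) (xs ! t) ((last ys # butlast ys) ! t)) (Suc u mod N))"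
    using ly by (intro prod.cong refl) (simp add: nth_last_Cons_butlast pred_mod_Suc_mod[simplified])
  also have "\<dots> = (\<Prod>t<N. B ((t + N - 1) mod N) (xs ! t) ((last ys # butlast ys) ! t))"
    by (rule prod.reindex_bij_betw[OF bij])
  also have "\<dots> = kmult (slices d N) (ktensor N (\<lambda>s. B ((s + N - 1) mod N))) shiftC xs ys"
    using kmult_shiftC_right[OF N ys] by (simp add: ktensor_def)
  finally show "kmult (slices d N) shiftC (ktensor N B) xs ys
      = kmult (slices d N) (ktensor N (\<lambda>s. B ((s + N - 1) mod N))) shiftC xs ys" .
qed

section \<open>Partial traces\<close>

lemma ptrace_except_cong:
  "keq_on (slices d N) M M' \<Longrightarrow> b < d \<Longrightarrow> ptrace_except d N t M a b = ptrace_except d N t M' a b"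
  unfolding ptrace_except_def by (intro sum.cong) (auto simp: slices_update keq_onD)

lemma sum_ptrace_except_diag:
  assumes "t < N"
  shows "(\<Sum>a<d. ptrace_except d N t M a a) = ktrace (slices d N) M"
proof -
  have "(\<Sum>a<d. ptrace_except d N t M a a) = (\<Sum>a<d. \<Sum>xs\<in>{xs \<in> slices d N. xs ! t = a}. M xs xs)"
    unfolding ptrace_except_def by (intro sum.cong refl) auto
  also have "\<dots> = ktrace (slices d N) M"
    unfolding ktrace_def by (rule sum.group) (use assms slices_nth_less in \<open>auto simp: finite_slices\<close>)
  finally show ?thesis .
qed

lemma slices_agreeing_off:
  assumes zs: "zs \<in> slices d N" and t: "t < N"
  shows "{ws \<in> slices d N. \<forall>s<N. s \<noteq> t \<longrightarrow> ws ! s = zs ! s} = (\<lambda>c. zs[t := c]) ` {..<d}"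
proof (intro equalityI subsetI)
  fix ws assume ws: "ws \<in> {ws \<in> slices d N. \<forall>s<N. s \<noteq> t \<longrightarrow> ws ! s = zs ! s}"
  then have "ws = zs[t := ws ! t]"
    using zs t by (auto simp: slices_length list_eq_iff_nth_eq nth_list_update)
  moreover have "ws ! t < d"
    using ws t slices_nth_less by auto
  ultimately show "ws \<in> (\<lambda>c. zs[t := c]) ` {..<d}" by blast
qed (use zs slices_update in \<open>auto simp: slices_length nth_list_update\<close>)

lemma sum_agreeing_off:
  assumes zs: "zs \<in> slices d N" and t: "t < N"
  shows "(\<Sum>ws\<in>slices d N. if \<forall>s<N. s \<noteq> t \<longrightarrow> ws ! s = zs ! s then F ws else 0)
       = (\<Sum>c<d. F (zs[t := c]) :: complex)"
proof -
  have inj: "inj_on (\<lambda>c. zs[t := c]) {..<d}"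
    by (rule inj_onI) (metis zs t slices_length nth_list_update_eq)
  have "(\<Sum>ws\<in>slices d N. if \<forall>s<N. s \<noteq> t \<longrightarrow> ws ! s = zs ! s then F ws else 0)
      = (\<Sum>ws\<in>{ws \<in> slices d N. \<forall>s<N. s \<noteq> t \<longrightarrow> ws ! s = zs ! s}. F ws)"
    by (simp add: sum.inter_filter finite_slices)
  also have "\<dots> = (\<Sum>c<d. F (zs[t := c]))"
    unfolding slices_agreeing_off[OF assms] by (simp add: sum.reindex[OF inj])
  finally show ?thesis .
qed

lemma sum_ktensor_conj_slice:
  fixes \<alpha> \<beta> :: "nat \<Rightarrow> nat kernel"
  assumes t: "t < N" and a: "a < d" and zs: "zs \<in> slices d N" and ws: "ws \<in> slices d N"
    and inverse: "\<And>s. s < N \<Longrightarrow> s \<noteq> t \<Longrightarrow> keq_on {..<d} (kmult {..<d} (\<beta> s) (\<alpha> s)) kid"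
  shows "(\<Sum>xs\<in>{xs \<in> slices d N. xs ! t = a}. ktensor N \<alpha> xs zs * ktensor N \<beta> ws (xs[t := b]))
       = \<alpha> t a (zs ! t) * \<beta> t (ws ! t) b * (if \<forall>s<N. s \<noteq> t \<longrightarrow> ws ! s = zs ! s then 1 else 0)"
proof -
  define h where "h s c = (if s = t then \<alpha> t c (zs ! t) * \<beta> t (ws ! t) b else \<alpha> s c (zs ! s) * \<beta> s (ws ! s) c)"
    for s c
  define g where "g s c = (if s = t then (if c = a then h s c else 0) else h s c)" for s c
  have "(\<Sum>xs\<in>{xs \<in> slices d N. xs ! t = a}. ktensor N \<alpha> xs zs * ktensor N \<beta> ws (xs[t := b]))
      = (\<Sum>xs\<in>{xs \<in> slices d N. xs ! t = a}. \<Prod>s<N. h s (xs ! s))"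
    by (intro sum.cong refl)
       (auto simp: h_def ktensor_def slices_length nth_list_update prod.distrib[symmetric] intro!: prod.cong)
  also have "\<dots> = (\<Sum>xs\<in>slices d N. \<Prod>s<N. g s (xs ! s))"
  proof -
    have "(\<Prod>s<N. g s (xs ! s)) = (if xs ! t = a then \<Prod>s<N. h s (xs ! s) else 0)" for xs
      using t by (auto simp: g_def intro!: prod.cong)
    then show ?thesis
      by (simp add: sum.inter_filter finite_slices)
  qed
  also have "\<dots> = (\<Sum>c<d. g t c) * (\<Prod>s\<in>{..<N} - {t}. \<Sum>c<d. g s c)"
    using t by (subst sum_slices_prod, subst prod.remove[of _ t]) auto
  also have "(\<Sum>c<d. g t c) = \<alpha> t a (zs ! t) * \<beta> t (ws ! t) b"
    using a by (simp add: g_def h_def)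
  also have "(\<Prod>s\<in>{..<N} - {t}. \<Sum>c<d. g s c) = (\<Prod>s\<in>{..<N} - {t}. if ws ! s = zs ! s then 1 else 0)"
  proof (intro prod.cong refl)
    fix s assume s: "s \<in> {..<N} - {t}"
    have "(\<Sum>c<d. g s c) = kmult {..<d} (\<beta> s) (\<alpha> s) (ws ! s) (zs ! s)"
      using s by (simp add: g_def h_def kmult_def mult.commute)
    also have "\<dots> = kid (ws ! s) (zs ! s)"
      using s zs ws by (intro keq_onD[OF inverse]) (auto simp: slices_nth_less)
    finally show "(\<Sum>c<d. g s c) = (if ws ! s = zs ! s then 1 else 0)"
      by (simp add: kid_def)
  qed
  also have "\<dots> = (if \<forall>s<N. s \<noteq> t \<longrightarrow> ws ! s = zs ! s then 1 else 0)"
    by (subst prod_indicator) auto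
  finally show ?thesis .
qed

lemma ptrace_except_ktensor_conj:
  fixes \<alpha> \<beta> :: "nat \<Rightarrow> nat kernel" and Y :: "nat list kernel"
  assumes t: "t < N" and a: "a < d" and b: "b < d"
    and inverse: "\<And>s. s < N \<Longrightarrow> s \<noteq> t \<Longrightarrow> keq_on {..<d} (kmult {..<d} (\<beta> s) (\<alpha> s)) kid"
  shows "ptrace_except d N t (kmult (slices d N) (ktensor N \<alpha>) (kmult (slices d N) Y (ktensor N \<beta>))) a b
       = kmult {..<d} (kmult {..<d} (\<alpha> t) (ptrace_except d N t Y)) (\<beta> t) a b"
proof -
  let ?S = "slices d N"
  let ?agree = "\<lambda>ws zs. \<forall>s<N. s \<noteq> t \<longrightarrow> ws ! s = zs ! s"
  have "ptrace_except d N t (kmult ?S (ktensor N \<alpha>) (kmult ?S Y (ktensor N \<beta>))) a b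
      = (\<Sum>zs\<in>?S. \<Sum>ws\<in>?S. Y zs ws *
           (\<Sum>xs\<in>{xs \<in> ?S. xs ! t = a}. ktensor N \<alpha> xs zs * ktensor N \<beta> ws (xs[t := b])))"
    unfolding ptrace_except_def kmult_def sum_distrib_left sum_distrib_right
    by (subst sum.swap, subst (2) sum.swap) (simp add: mult_ac)
  also have "\<dots> = (\<Sum>zs\<in>?S. \<Sum>ws\<in>?S. if ?agree ws zs then \<alpha> t a (zs ! t) * Y zs ws * \<beta> t (ws ! t) b else 0)"
    by (intro sum.cong refl) (auto simp: sum_ktensor_conj_slice[OF t a _ _ inverse])
  also have "\<dots> = (\<Sum>zs\<in>?S. \<Sum>c<d. \<alpha> t a (zs ! t) * Y zs (zs[t := c]) * \<beta> t c b)"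
    using t by (intro sum.cong refl) (simp add: sum_agreeing_off slices_length)
  also have "\<dots> = (\<Sum>a'<d. \<Sum>zs\<in>{xs \<in> ?S. xs ! t = a'}. \<Sum>c<d. \<alpha> t a a' * Y zs (zs[t := c]) * \<beta> t c b)"
    by (subst sum.group[symmetric, where g = "\<lambda>zs. zs ! t"]) (use t slices_nth_less in \<open>auto simp: finite_slices\<close>)
  also have "\<dots> = (\<Sum>c<d. \<Sum>a'<d. \<alpha> t a a' * (\<Sum>zs\<in>{xs \<in> ?S. xs ! t = a'}. Y zs (zs[t := c])) * \<beta> t c b)"
    by (subst sum.swap) (simp add: sum.swap[of _ "{..<d}" "{xs \<in> ?S. xs ! t = _}"] sum_distrib_left sum_distrib_right mult_ac)
  also have "\<dots> = kmult {..<d} (kmult {..<d} (\<alpha> t) (ptrace_except d N t Y)) (\<beta> t) a b"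
    by (simp add: kmult_def ptrace_except_def sum_distrib_right)
  finally show ?thesis .
qed

lemma site0_shifted_entry:
  assumes "N \<ge> 1" "length xs = N" "length ws = N"
  shows "site_op N 0 \<rho> xs (last ws # butlast ws) = \<rho> (hd xs) (last ws) * (if tl xs = butlast ws then 1 else 0)"
proof -
  have "(\<forall>s<N. s \<noteq> 0 \<longrightarrow> xs ! s = (last ws # butlast ws) ! s) \<longleftrightarrow> (\<forall>i. Suc i < N \<longrightarrow> xs ! Suc i = butlast ws ! i)"
    by (metis nth_Cons_Suc not0_implies_Suc nat.distinct(1))
  also have "\<dots> \<longleftrightarrow> tl xs = butlast ws"
    using assms by (auto simp: list_eq_iff_nth_eq nth_tl)
  moreover have "xs \<noteq> []"
    using assms by auto
  ultimately show ?thesis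
    by (simp add: site_op_def hd_conv_nth)
qed

lemma nth_eq_of_steps:
  assumes "\<And>s. i \<le> s \<Longrightarrow> s < j \<Longrightarrow> f (Suc s) = f s" "i \<le> k" "k \<le> j"
  shows "f k = f i"
  using assms(2,3) by (induction k) (auto simp: le_Suc_eq assms(1))

lemma tl_eq_butlast_update_iff:
  assumes len: "length xs = N" and t: "t < N" and xt: "xs ! t = a"
  shows "tl xs = butlast (xs[t := b]) \<longleftrightarrow> xs = map (\<lambda>s. if s \<le> t then a else b) [0..<N]"
proof
  assume shift: "tl xs = butlast (xs[t := b])"
  have step: "xs ! Suc s = (if s = t then b else xs ! s)" if "Suc s < N" for s
  proof -
    have "tl xs ! s = butlast (xs[t := b]) ! s" using shift by simp
    then show ?thesis using that len by (simp add: nth_tl nth_butlast nth_list_update)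
  qed
  have "xs ! k = a" if "k \<le> t" for k
    using nth_eq_of_steps[of 0 t "(!) xs" k] nth_eq_of_steps[of 0 t "(!) xs" t] step t that xt by simp
  moreover have "xs ! k = b" if "t < k" "k < N" for k
    using nth_eq_of_steps[of "Suc t" "N - 1" "(!) xs" k] step[of t] step that by simp
  ultimately show "xs = map (\<lambda>s. if s \<le> t then a else b) [0..<N]"
    using len t by (intro nth_equalityI) auto
next
  assume xs: "xs = map (\<lambda>s. if s \<le> t then a else b) [0..<N]"
  show "tl xs = butlast (xs[t := b])"
    using len t by (intro nth_equalityI) (auto simp: xs nth_tl nth_butlast nth_list_update)
qed

lemma ptrace_except_site0_shiftC:
  assumes N: "N \<ge> 1" and t: "t < N" and a: "a < d" and b: "b < d"
  shows "ptrace_except d N t (kmult (slices d N) (site_op N 0 \<rho>) shiftC) a b = \<rho> a b"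
proof -
  define z where "z = map (\<lambda>s. if s \<le> t then a else b) [0..<N]"
  have z: "z \<in> {xs \<in> slices d N. xs ! t = a}"
    using a b t by (auto simp: z_def slices_def)
  have z_ends: "length z = N" "z \<noteq> []" "hd z = a" "t \<noteq> N - 1 \<Longrightarrow> last z = b"
    using N t by (auto simp: z_def hd_conv_nth last_conv_nth)
  have "kmult (slices d N) (site_op N 0 \<rho>) shiftC xs (xs[t := b]) = (if xs = z then \<rho> a b else 0)"
    if "xs \<in> {xs \<in> slices d N. xs ! t = a}" for xs
  proof -
    from that have xs: "xs \<in> slices d N" "length xs = N" "xs ! t = a"
      by (auto simp: slices_length)
    have "kmult (slices d N) (site_op N 0 \<rho>) shiftC xs (xs[t := b])
        = \<rho> (hd xs) (last (xs[t := b])) * (if tl xs = butlast (xs[t := b]) then 1 else 0)"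
      using kmult_shiftC_right[OF N slices_update[OF xs(1) b]] site0_shifted_entry[OF N xs(2)] xs(2)
      by simp
    also have "\<dots> = (if xs = z then \<rho> a b else 0)"
      using tl_eq_butlast_update_iff[OF xs(2) t xs(3), of b, folded z_def] z_ends
      by (auto simp: last_list_update)
    finally show ?thesis .
  qed
  then have "ptrace_except d N t (kmult (slices d N) (site_op N 0 \<rho>) shiftC) a b
      = (\<Sum>xs\<in>{xs \<in> slices d N. xs ! t = a}. if xs = z then \<rho> a b else 0)"
    unfolding ptrace_except_def by (intro sum.cong) auto
  also have "\<dots> = \<rho> a b"
    using z by (simp add: finite_slices)
  finally show ?thesis .
qed

section \<open>Rank-one operators and the maximally entangled vector\<close>

lemma kmult_rank_one_normalized:
  assumes "vinner J \<phi> \<psi> \<noteq> 0"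
  shows "kmult J (\<lambda>p q. \<psi> p * cnj (\<phi> q) / vinner J \<phi> \<psi>) (\<lambda>p q. \<psi> p * cnj (\<phi> q) / vinner J \<phi> \<psi>)
       = (\<lambda>p q. \<psi> p * cnj (\<phi> q) / vinner J \<phi> \<psi>)"
proof (intro ext)
  fix p q
  let ?c = "vinner J \<phi> \<psi>"
  have "kmult J (\<lambda>p q. \<psi> p * cnj (\<phi> q) / ?c) (\<lambda>p q. \<psi> p * cnj (\<phi> q) / ?c) p q
      = \<psi> p * cnj (\<phi> q) / (?c * ?c) * (\<Sum>r\<in>J. cnj (\<phi> r) * \<psi> r)"
    unfolding kmult_def sum_distrib_left by (intro sum.cong refl) (simp add: divide_inverse mult_ac)
  then show "kmult J (\<lambda>p q. \<psi> p * cnj (\<phi> q) / ?c) (\<lambda>p q. \<psi> p * cnj (\<phi> q) / ?c) p q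
      = \<psi> p * cnj (\<phi> q) / ?c"
    using assms by (simp add: vinner_def[symmetric])
qed

lemma ktrace_rank_one_normalized:
  "vinner J \<phi> \<psi> \<noteq> 0 \<Longrightarrow> ktrace J (\<lambda>p q. \<psi> p * cnj (\<phi> q) / vinner J \<phi> \<psi>) = 1"
  unfolding ktrace_def by (simp add: sum_divide_distrib[symmetric] vinner_def mult.commute)

lemma kapply_tensor_idE_PhiPlus:
  assumes "finite J" "e \<in> J"
  shows "kapply (J \<times> J) (tensor_idE M) PhiPlus (x, e) = M x e"
proof -
  have "kapply (J \<times> J) (tensor_idE M) PhiPlus (x, e) = (\<Sum>q\<in>J \<times> J. if q = (e, e) then M x e else 0)"
    unfolding kapply_def
    by (intro sum.cong refl) (auto simp: tensor_idE_def kid_def PhiPlus_def split: if_splits)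
  then show ?thesis
    using assms by simp
qed

lemma kapply_kadj_tensor_idE_PhiPlus:
  assumes "finite J" "e \<in> J"
  shows "kapply (J \<times> J) (kadj (tensor_idE M)) PhiPlus (x, e) = cnj (M e x)"
proof -
  have "kapply (J \<times> J) (kadj (tensor_idE M)) PhiPlus (x, e) = (\<Sum>q\<in>J \<times> J. if q = (e, e) then cnj (M e x) else 0)"
    unfolding kapply_def
    by (intro sum.cong refl) (auto simp: kadj_def tensor_idE_def kid_def PhiPlus_def split: if_splits)
  then show ?thesis
    using assms by simp
qed

lemma vinner_PhiPlus:
  assumes "finite J"
  shows "vinner (J \<times> J) (kapply (J \<times> J) (kadj (tensor_idE U)) PhiPlus) (kapply (J \<times> J) (tensor_idE M) PhiPlus)
       = ktrace J (kmult J M U)"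
  unfolding vinner_def ktrace_def kmult_def sum.cartesian_product'
  using assms by (simp add: kapply_tensor_idE_PhiPlus kapply_kadj_tensor_idE_PhiPlus mult.commute)

lemma ptrace_E_PhiPlus:
  assumes "finite J"
  shows "ptrace_E J (\<lambda>p q. kapply (J \<times> J) (tensor_idE M) PhiPlus p
                          * cnj (kapply (J \<times> J) (kadj (tensor_idE U)) PhiPlus q) / c) x y
       = kmult J M U x y / c"
  unfolding ptrace_E_def kmult_def
  using assms by (simp add: kapply_tensor_idE_PhiPlus kapply_kadj_tensor_idE_PhiPlus sum_divide_distrib)

section \<open>The time-translation structure of the quantum action\<close>

lemma pred_phase_eq:
  fixes \<epsilon> :: real
  assumes "s < N"
  shows "- \<i> * of_real \<epsilon> * of_nat s + \<i> * of_real \<epsilon> * of_nat ((s + N - 1) mod N)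
       = (if s = 0 then \<i> * of_real \<epsilon> * (of_nat N - 1) else - \<i> * of_real \<epsilon>)"
proof (cases s)
  case 0
  then have "(s + N - 1) mod N = N - 1" using assms by simp
  then show ?thesis using 0 assms by (simp add: of_nat_diff)
next
  case (Suc u)
  then have "(s + N - 1) mod N = u" using assms by simp
  then show ?thesis using Suc by (simp add: algebra_simps)
qed

locale quantum_action =
  fixes d N :: nat and \<epsilon> :: real and H :: "nat kernel" and P :: "nat list kernel"
  assumes N_pos: "N \<ge> 1"
    and hermitian_H: "hermitian_on {..<d} H"
    and exp_P: "keq_on (slices d N) (kexp (slices d N) (kscale (\<i> * of_real \<epsilon>) P)) shiftC"
begin

abbreviation S :: "nat list set" where "S \<equiv> slices d N"
abbreviation V :: "nat list kernel" where "V \<equiv> Vop d N \<epsilon> H"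
abbreviation U :: "nat list kernel" where "U \<equiv> eiStilde_half d N \<epsilon> H P"

definition expH :: "complex \<Rightarrow> nat kernel" where
  "expH c = kexp {..<d} (kscale c H)"

(* Both e^{iS~} and V^dagger C V reduce to the normal form (tensor_s slice_phase s) C. *)
definition slice_phase :: "nat \<Rightarrow> nat kernel" where
  "slice_phase s = expH (if s = 0 then \<i> * of_real \<epsilon> * (of_nat N - 1) else - \<i> * of_real \<epsilon>)"

lemma expH_add: "keq_on {..<d} (kmult {..<d} (expH x) (expH y)) (expH (x + y))"
  unfolding expH_def by (rule kexp_kscale_add) simp

lemma expH_0: "keq_on {..<d} (expH 0) kid"
  unfolding expH_def by (rule kexp_kscale_0) simp

lemma expH_inverse: "x + y = 0 \<Longrightarrow> keq_on {..<d} (kmult {..<d} (expH x) (expH y)) kid"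
  using expH_add[of x y] expH_0 by (metis keq_on_trans)

lemma kadj_expH: "keq_on {..<d} (kadj (expH c)) (expH (cnj c))"
  unfolding expH_def by (rule kadj_kexp_kscale) (simp_all add: hermitian_H)

lemma Vop_ktensor: "keq_on S V (ktensor N (\<lambda>s. expH (\<i> * of_real \<epsilon> * of_nat s)))"
  unfolding Vop_def expH_def by (rule kprod_site_ops)

lemma kadj_Vop: "keq_on S (kadj V) (ktensor N (\<lambda>s. expH (- \<i> * of_real \<epsilon> * of_nat s)))"
proof -
  have "keq_on S (kadj V) (kadj (ktensor N (\<lambda>s. expH (\<i> * of_real \<epsilon> * of_nat s))))"
    using Vop_ktensor by (simp add: keq_on_def kadj_def)
  also have "\<dots> = ktensor N (\<lambda>s. kadj (expH (\<i> * of_real \<epsilon> * of_nat s)))"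
    by (rule kadj_ktensor)
  also have "keq_on S \<dots> (ktensor N (\<lambda>s. expH (- \<i> * of_real \<epsilon> * of_nat s)))"
  proof (rule ktensor_keq_on)
    fix s
    show "keq_on {..<d} (kadj (expH (\<i> * of_real \<epsilon> * of_nat s))) (expH (- \<i> * of_real \<epsilon> * of_nat s))"
      using kadj_expH[of "\<i> * of_real \<epsilon> * of_nat s"] by simp
  qed
  finally show ?thesis .
qed

lemma Vop_unitary: "keq_on S (kmult S V (kadj V)) kid"
proof -
  have "keq_on S (kmult S V (kadj V))
      (kmult S (ktensor N (\<lambda>s. expH (\<i> * of_real \<epsilon> * of_nat s))) (ktensor N (\<lambda>s. expH (- \<i> * of_real \<epsilon> * of_nat s))))"
    by (intro kmult_keq_on Vop_ktensor kadj_Vop)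
  also have "\<dots> = ktensor N (\<lambda>s. kmult {..<d} (expH (\<i> * of_real \<epsilon> * of_nat s)) (expH (- \<i> * of_real \<epsilon> * of_nat s)))"
    by (rule kmult_ktensor)
  also have "keq_on S \<dots> (ktensor N (\<lambda>_. kid))"
    by (intro ktensor_keq_on expH_inverse) simp
  also have "keq_on S \<dots> kid"
    by (rule ktensor_kid)
  finally show ?thesis .
qed

lemma exp_P_half_square:
  "keq_on S (kmult S (kexp S (kscale (\<i> * of_real \<epsilon> / 2) P)) (kexp S (kscale (\<i> * of_real \<epsilon> / 2) P))) shiftC"
proof -
  have "\<i> * of_real \<epsilon> / 2 + \<i> * of_real \<epsilon> / 2 = \<i> * (of_real \<epsilon> :: complex)"
    by simp
  then show ?thesis
    using kexp_kscale_add[OF finite_slices, where a = "\<i> * of_real \<epsilon> / 2" and b = "\<i> * of_real \<epsilon> / 2" and A = P] exp_P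
    by (metis keq_on_trans)
qed

lemma Vop_conj_shiftC: "keq_on S (kmult S (kadj V) (kmult S shiftC V)) (kmult S (ktensor N slice_phase) shiftC)"
proof -
  let ?v = "\<lambda>s. expH (\<i> * of_real \<epsilon> * of_nat s)"
  let ?w = "\<lambda>s. expH (- \<i> * of_real \<epsilon> * of_nat s)"
  have "keq_on S (kmult S (kadj V) (kmult S shiftC V)) (kmult S (kadj V) (kmult S shiftC (ktensor N ?v)))"
    by (intro kmult_keq_on keq_on_refl Vop_ktensor)
  also have "keq_on S \<dots> (kmult S (kadj V) (kmult S (ktensor N (\<lambda>s. ?v ((s + N - 1) mod N))) shiftC))"
    by (intro kmult_keq_on keq_on_refl shiftC_ktensor N_pos)
  also have "\<dots> = kmult S (kmult S (kadj V) (ktensor N (\<lambda>s. ?v ((s + N - 1) mod N)))) shiftC"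
    by (simp add: kmult_assoc)
  also have "keq_on S \<dots> (kmult S (kmult S (ktensor N ?w) (ktensor N (\<lambda>s. ?v ((s + N - 1) mod N)))) shiftC)"
    by (intro kmult_keq_on keq_on_refl kadj_Vop)
  also have "\<dots> = kmult S (ktensor N (\<lambda>s. kmult {..<d} (?w s) (?v ((s + N - 1) mod N)))) shiftC"
    by (simp add: kmult_ktensor)
  also have "keq_on S \<dots> (kmult S (ktensor N slice_phase) shiftC)"
  proof (intro kmult_keq_on keq_on_refl ktensor_keq_on)
    fix s assume "s < N"
    then have "slice_phase s = expH (- \<i> * of_real \<epsilon> * of_nat s + \<i> * of_real \<epsilon> * of_nat ((s + N - 1) mod N))"
      by (simp only: slice_phase_def pred_phase_eq)
    then show "keq_on {..<d} (kmult {..<d} (?w s) (?v ((s + N - 1) mod N))) (slice_phase s)"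
      by (simp only: expH_add)
  qed
  finally show ?thesis .
qed

lemma eiStilde_eq: "keq_on S (eiStilde d N \<epsilon> H) (kmult S (ktensor N slice_phase) shiftC)"
proof -
  let ?G = "\<lambda>s. if s = 0 then expH (\<i> * of_real (\<epsilon> * real N)) else kid"
  let ?w = "\<lambda>_. expH (- \<i> * of_real \<epsilon>)"
  have "keq_on S (eiStilde d N \<epsilon> H) (kmult S (site_op N 0 (expH (\<i> * of_real (\<epsilon> * real N))))
      (kmult S shiftC (kprod S (map (\<lambda>t. site_op N t (expH (- \<i> * of_real \<epsilon>))) [0..<N]))))"
    by (simp add: eiStilde_def eiS_def expH_def)
  also have "keq_on S \<dots> (kmult S (ktensor N ?G) (kmult S shiftC (ktensor N ?w)))"
    using N_pos by (intro kmult_keq_on kprod_site_ops) (simp_all add: site_op_eq_ktensor del: of_real_mult)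
  also have "keq_on S \<dots> (kmult S (ktensor N ?G) (kmult S (ktensor N ?w) shiftC))"
    using shiftC_ktensor[OF N_pos, of d ?w] by (rule kmult_keq_on[OF keq_on_refl])
  also have "\<dots> = kmult S (ktensor N (\<lambda>s. kmult {..<d} (?G s) (?w s))) shiftC"
    by (simp add: kmult_ktensor flip: kmult_assoc)
  also have "keq_on S \<dots> (kmult S (ktensor N slice_phase) shiftC)"
  proof (intro kmult_keq_on keq_on_refl ktensor_keq_on)
    fix s
    show "keq_on {..<d} (kmult {..<d} (?G s) (?w s)) (slice_phase s)"
    proof (cases "s = 0")
      case True
      have phase: "\<i> * of_real (\<epsilon> * real N) + - \<i> * of_real \<epsilon> = \<i> * of_real \<epsilon> * (of_nat N - 1)"
        by (simp add: algebra_simps)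
      show ?thesis
        unfolding slice_phase_def by (simp only: True if_P[OF refl] flip: phase) (rule expH_add)
    next
      case False
      then show ?thesis
        using kmult_kid_left[of "{..<d}" "?w s"] by (simp add: slice_phase_def)
    qed
  qed
  finally show ?thesis .
qed

lemma eiStilde_conj_shiftC: "keq_on S (eiStilde d N \<epsilon> H) (kmult S (kadj V) (kmult S shiftC V))"
  using eiStilde_eq keq_on_sym[OF Vop_conj_shiftC] by (rule keq_on_trans)

lemma eiStilde_half_square: "keq_on S (kmult S U U) (eiStilde d N \<epsilon> H)"
proof -
  let ?E = "kexp S (kscale (\<i> * of_real \<epsilon> / 2) P)"
  have "keq_on S (kmult S U U) (kmult S (kadj V) (kmult S ?E (kmult S (kmult S V (kadj V)) (kmult S ?E V))))"
    by (simp add: eiStilde_half_def kmult_assoc)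
  also have "keq_on S \<dots> (kmult S (kadj V) (kmult S ?E (kmult S kid (kmult S ?E V))))"
    by (intro kmult_keq_on keq_on_refl Vop_unitary)
  also have "keq_on S \<dots> (kmult S (kadj V) (kmult S (kmult S ?E ?E) V))"
    unfolding kmult_assoc by (intro kmult_keq_on keq_on_refl kmult_kid_left finite_slices)
  also have "keq_on S \<dots> (kmult S (kadj V) (kmult S shiftC V))"
    by (intro kmult_keq_on keq_on_refl exp_P_half_square)
  also have "keq_on S \<dots> (eiStilde d N \<epsilon> H)"
    by (rule keq_on_sym[OF eiStilde_conj_shiftC])
  finally show ?thesis .
qed

lemma site0_kadj_Vop_comm:
  "keq_on S (kmult S (site_op N 0 \<rho>) (kadj V)) (kmult S (kadj V) (site_op N 0 \<rho>))"
proof -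
  let ?r = "\<lambda>s. if s = 0 then \<rho> else kid"
  let ?w = "\<lambda>s. expH (- \<i> * of_real \<epsilon> * of_nat s)"
  have w0: "keq_on {..<d} (?w 0) kid"
    using expH_0 by simp
  have "keq_on S (kmult S (site_op N 0 \<rho>) (kadj V)) (ktensor N (\<lambda>s. kmult {..<d} (?r s) (?w s)))"
    using N_pos kmult_keq_on[OF keq_on_refl kadj_Vop, of "site_op N 0 \<rho>"]
    by (simp add: site_op_eq_ktensor kmult_ktensor)
  also have "keq_on S \<dots> (ktensor N (\<lambda>s. kmult {..<d} (?w s) (?r s)))"
  proof (rule ktensor_keq_on)
    fix s
    show "keq_on {..<d} (kmult {..<d} (?r s) (?w s)) (kmult {..<d} (?w s) (?r s))"
    proof (cases "s = 0")
      case True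
      have "keq_on {..<d} (kmult {..<d} \<rho> (?w 0)) \<rho>" "keq_on {..<d} (kmult {..<d} (?w 0) \<rho>) \<rho>"
        using keq_on_trans[OF kmult_keq_on[OF keq_on_refl w0] kmult_kid_right[of "{..<d}"]]
          keq_on_trans[OF kmult_keq_on[OF w0 keq_on_refl] kmult_kid_left[of "{..<d}"]]
        by simp_all
      then show ?thesis
        using True by (auto intro: keq_on_trans keq_on_sym)
    next
      case False
      then show ?thesis
        using kmult_kid_left[of "{..<d}" "?w s"] kmult_kid_right[of "{..<d}" "?w s"]
        by (auto intro: keq_on_trans keq_on_sym)
    qed
  qed
  also have "keq_on S \<dots> (kmult S (kadj V) (site_op N 0 \<rho>))"
    using N_pos kmult_keq_on[OF kadj_Vop keq_on_refl, of "site_op N 0 \<rho>"]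
    by (simp add: site_op_eq_ktensor kmult_ktensor keq_on_sym)
  finally show ?thesis .
qed

lemma ptrace_except_site0_eiStilde:
  assumes t: "t < N" and a: "a < d" and b: "b < d"
  shows "ptrace_except d N t (kmult S (site_op N 0 \<rho>) (eiStilde d N \<epsilon> H)) a b
       = kmult {..<d} (kmult {..<d} (expH (- \<i> * of_real \<epsilon> * of_nat t)) \<rho>) (expH (\<i> * of_real \<epsilon> * of_nat t)) a b"
proof -
  let ?R0 = "site_op N 0 \<rho>"
  let ?v = "\<lambda>s. expH (\<i> * of_real \<epsilon> * of_nat s)"
  let ?w = "\<lambda>s. expH (- \<i> * of_real \<epsilon> * of_nat s)"
  have "keq_on S (kmult S ?R0 (eiStilde d N \<epsilon> H)) (kmult S ?R0 (kmult S (kadj V) (kmult S shiftC V)))"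
    by (intro kmult_keq_on keq_on_refl eiStilde_conj_shiftC)
  also have "keq_on S \<dots> (kmult S (kmult S (kadj V) ?R0) (kmult S shiftC V))"
    unfolding kmult_assoc[symmetric] by (intro kmult_keq_on keq_on_refl site0_kadj_Vop_comm)
  also have "keq_on S \<dots> (kmult S (ktensor N ?w) (kmult S (kmult S ?R0 shiftC) (ktensor N ?v)))"
    unfolding kmult_assoc by (intro kmult_keq_on keq_on_refl kadj_Vop Vop_ktensor)
  finally have "ptrace_except d N t (kmult S ?R0 (eiStilde d N \<epsilon> H)) a b
      = ptrace_except d N t (kmult S (ktensor N ?w) (kmult S (kmult S ?R0 shiftC) (ktensor N ?v))) a b"
    using b by (rule ptrace_except_cong)
  also have "\<dots> = kmult {..<d} (kmult {..<d} (?w t) (ptrace_except d N t (kmult S ?R0 shiftC))) (?v t) a b"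
  proof (rule ptrace_except_ktensor_conj[OF t a b])
    fix s
    show "keq_on {..<d} (kmult {..<d} (?v s) (?w s)) kid"
      by (rule expH_inverse) simp
  qed
  also have "\<dots> = kmult {..<d} (kmult {..<d} (?w t) \<rho>) (?v t) a b"
  proof -
    have "keq_on {..<d} (ptrace_except d N t (kmult S ?R0 shiftC)) \<rho>"
      using N_pos t by (intro keq_onI) (simp add: ptrace_except_site0_shiftC)
    then show ?thesis
      using a b by (intro keq_onD[OF kmult_keq_on[OF kmult_keq_on[OF keq_on_refl]]]) auto
  qed
  finally show ?thesis .
qed

lemma ktrace_site0_eiStilde: "ktrace S (kmult S (site_op N 0 \<rho>) (eiStilde d N \<epsilon> H)) = ktrace {..<d} \<rho>"
proof -
  have "keq_on {..<d} (kmult {..<d} (kmult {..<d} (expH 0) \<rho>) (expH 0)) \<rho>"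
    using kmult_keq_on[OF kmult_keq_on[OF expH_0 keq_on_refl] expH_0, of \<rho>]
      kmult_kid_left[of "{..<d}" \<rho>] kmult_kid_right[of "{..<d}"]
    by (auto intro: keq_on_trans)
  then have "ptrace_except d N 0 (kmult S (site_op N 0 \<rho>) (eiStilde d N \<epsilon> H)) a a = \<rho> a a" if "a < d" for a
    using N_pos that by (simp add: ptrace_except_site0_eiStilde keq_onD)
  then have "(\<Sum>a<d. ptrace_except d N 0 (kmult S (site_op N 0 \<rho>) (eiStilde d N \<epsilon> H)) a a) = ktrace {..<d} \<rho>"
    by (simp add: ktrace_def)
  then show ?thesis
    using N_pos by (simp add: sum_ptrace_except_diag)
qed

lemma site0_eiStilde_half_square:
  "keq_on S (kmult S (kmult S (site_op N 0 \<rho>) U) U) (kmult S (site_op N 0 \<rho>) (eiStilde d N \<epsilon> H))"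
  unfolding kmult_assoc by (intro kmult_keq_on keq_on_refl eiStilde_half_square)

lemma vinner_Psibar_Psi: "vinner (S \<times> S) (Psibar d N \<epsilon> H P) (Psi d N \<epsilon> H P \<rho>) = ktrace {..<d} \<rho>"
proof -
  have "vinner (S \<times> S) (Psibar d N \<epsilon> H P) (Psi d N \<epsilon> H P \<rho>) = ktrace S (kmult S (kmult S (site_op N 0 \<rho>) U) U)"
    unfolding Psi_def Psibar_def by (rule vinner_PhiPlus[OF finite_slices])
  also have "\<dots> = ktrace S (kmult S (site_op N 0 \<rho>) (eiStilde d N \<epsilon> H))"
    by (rule ktrace_cong[OF site0_eiStilde_half_square])
  finally show ?thesis
    by (simp add: ktrace_site0_eiStilde)
qed

lemma ptrace_E_Rop:
  assumes "xs \<in> S" "ys \<in> S"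
  shows "ptrace_E S (Rop d N \<epsilon> H P \<rho>) xs ys
       = kmult S (site_op N 0 \<rho>) (eiStilde d N \<epsilon> H) xs ys / ktrace {..<d} \<rho>"
proof -
  have "ptrace_E S (Rop d N \<epsilon> H P \<rho>) xs ys
      = kmult S (kmult S (site_op N 0 \<rho>) U) U xs ys / vinner (S \<times> S) (Psibar d N \<epsilon> H P) (Psi d N \<epsilon> H P \<rho>)"
    unfolding Rop_def Psi_def Psibar_def by (rule ptrace_E_PhiPlus[OF finite_slices])
  then show ?thesis
    using keq_onD[OF site0_eiStilde_half_square assms] by (simp add: vinner_Psibar_Psi)
qed

lemma ptrace_except_ptrace_E_Rop:
  assumes "t < N" "a < d" "b < d"
  shows "ptrace_except d N t (ptrace_E S (Rop d N \<epsilon> H P \<rho>)) a b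
       = kmult {..<d} (kmult {..<d} (expH (- \<i> * of_real \<epsilon> * of_nat t)) \<rho>) (expH (\<i> * of_real \<epsilon> * of_nat t)) a b
         / ktrace {..<d} \<rho>"
proof -
  have "ptrace_except d N t (ptrace_E S (Rop d N \<epsilon> H P \<rho>)) a b
      = ptrace_except d N t (\<lambda>xs ys. kmult S (site_op N 0 \<rho>) (eiStilde d N \<epsilon> H) xs ys / ktrace {..<d} \<rho>) a b"
    using assms(3) by (intro ptrace_except_cong keq_onI) (simp add: ptrace_E_Rop)
  also have "\<dots> = ptrace_except d N t (kmult S (site_op N 0 \<rho>) (eiStilde d N \<epsilon> H)) a b / ktrace {..<d} \<rho>"
    by (simp add: ptrace_except_def sum_divide_distrib)
  finally show ?thesis
    using assms by (simp add: ptrace_except_site0_eiStilde)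
qed

end

theorem theorem7:
  fixes d N :: nat and \<epsilon> :: real
    and H \<rho> :: "nat kernel" and P :: "nat list kernel"
  assumes "d \<ge> 1" and "N \<ge> 1" and "\<epsilon> > 0"
    and "hermitian_on {..<d} H"
    and "hermitian_on (slices d N) P"
    and "\<forall>xs\<in>slices d N. \<forall>ys\<in>slices d N.
           kexp (slices d N) (kscale (\<i> * of_real \<epsilon>) P) xs ys = shiftC xs ys"
    and "psd_on {..<d} \<rho>"
    and "ktrace {..<d} \<rho> > 0"
  shows "vinner (slices d N \<times> slices d N) (Psibar d N \<epsilon> H P) (Psi d N \<epsilon> H P \<rho>) \<noteq> 0
    \<and> (\<forall>p\<in>slices d N \<times> slices d N. \<forall>q\<in>slices d N \<times> slices d N.
         kmult (slices d N \<times> slices d N) (Rop d N \<epsilon> H P \<rho>) (Rop d N \<epsilon> H P \<rho>) p q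
           = Rop d N \<epsilon> H P \<rho> p q)
    \<and> ktrace (slices d N \<times> slices d N) (Rop d N \<epsilon> H P \<rho>) = 1
    \<and> (\<forall>xs\<in>slices d N. \<forall>ys\<in>slices d N.
         ptrace_E (slices d N) (Rop d N \<epsilon> H P \<rho>) xs ys
           = kmult (slices d N) (site_op N 0 \<rho>) (eiStilde d N \<epsilon> H) xs ys / ktrace {..<d} \<rho>)
    \<and> (\<forall>t<N. \<forall>a<d. \<forall>b<d.
         ptrace_except d N t (ptrace_E (slices d N) (Rop d N \<epsilon> H P \<rho>)) a b
           = kmult {..<d}
               (kmult {..<d} (kexp {..<d} (kscale (- \<i> * of_real \<epsilon> * of_nat t) H)) \<rho>)
               (kexp {..<d} (kscale (\<i> * of_real \<epsilon> * of_nat t) H)) a b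
             / ktrace {..<d} \<rho>)"
proof -
  \<comment> \<open>Only \<open>N \<ge> 1\<close>, hermiticity of \<open>H\<close>, \<open>e\<^sup>i\<^sup>\<epsilon>\<^sup>P = C\<close> and \<open>tr \<rho> \<noteq> 0\<close> are needed.\<close>
  interpret quantum_action d N \<epsilon> H P
    using assms(2,4,6) by unfold_locales (auto simp: keq_on_def)
  have nonzero: "vinner (S \<times> S) (Psibar d N \<epsilon> H P) (Psi d N \<epsilon> H P \<rho>) \<noteq> 0"
    using assms(8) by (simp add: vinner_Psibar_Psi)
  show ?thesis
    using nonzero ptrace_E_Rop ptrace_except_ptrace_E_Rop[unfolded expH_def]
      kmult_rank_one_normalized[OF nonzero, folded Rop_def]
      ktrace_rank_one_normalized[OF nonzero, folded Rop_def]
    by simp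
qed

end
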